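(* Let $n,d,r$ be positive integers with $r\le d\le n$. Let $F\in\mathbb{R}^{d\times n}$ have rank $d$, with compact SVD $F=U_F\Sigma_F V_F^\top$ ($V_F\in\mathbb{R}^{n\times d}$ with orthonormal columns), and suppose $\max_{i}\|e_i^\top V_F\|_2\le \mu\sqrt{d/n}$; let $\kappa=\sigma_{\max}(F)/\sigma_{\min}(F)$. Let $W^*\in\mathbb{R}^{d\times d}$ be symmetric of rank $r$ with $\|W^*\|_2\le c_W$, $L^*=F^\top W^*F$, and let $S^*\in\mathbb{R}^{n\times n}$ be symmetric with at most $z$ nonzero entries per row and per column, $z\le n/(20\mu^2d\kappa)$. Let $M=L^*+S^*$. Let $t\ge1$ be an integer, let $\zeta_t=\mu^2\sigma_{\max}^2(F)\frac{d}{n}\frac{c_W}{5^{t-1}}$, and let $L_{t-1}\in\mathbb{R}^{n\times n}$ satisfy $\|L^*-L_{t-1}\|_\infty\le\mu^2\sigma_{\max}^2(F)\frac{d}{n}\frac{c_W}{5^{t-1}}$. Define $S_t=\mathcal{P}_{\zeta_t}(M-L_{t-1})$. Then $\|S^*-S_t\|_\infty\le2\mu^2\sigma_{\max}^2(F)\frac{d}{n}\frac{c_W}{5^{t-1}}$ and $\operatorname{Supp}(S_t)\subseteq\operatorname{Supp}(S^* )$.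
   Context: $e_i$ is the $i$-th standard basis vector; $\sigma_{\max}(F),\sigma_{\min}(F)$ are the largest and smallest of the $d$ singular values of $F$. $\|A\|_\infty=\max_{i,j}|A_{ij}|$, $\|A\|_2$ is the spectral norm, $\operatorname{Supp}(A)$ is the set of indices of nonzero entries. For $a\ge0$, $\mathcal{P}_a(A)$ is entrywise hard thresholding: $(\mathcal{P}_a(A))_{ij}=A_{ij}$ if $|A_{ij}|>a$ and $0$ otherwise. *)

theory Defs
  imports "HOL-Analysis.Analysis"
begin

definition singular_values :: "real^'n^'d \<Rightarrow> real set" where
  "singular_values F = {s. s \<ge> 0 \<and> (\<exists>x. x \<noteq> 0 \<and> (F ** transpose F) *v x = (s^2) *\<^sub>R x)}"

definition sigma_max :: "real^'n^'d \<Rightarrow> real" where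
  "sigma_max F = Max (singular_values F)"

definition sigma_min :: "real^'n^'d \<Rightarrow> real" where
  "sigma_min F = Min (singular_values F)"

definition spec_norm :: "real^'n^'m \<Rightarrow> real" where
  "spec_norm A = onorm (\<lambda>x. A *v x)"

definition max_norm :: "real^'n^'m \<Rightarrow> real" where
  "max_norm A = Max {\<bar>A $ i $ j\<bar> | i j. True}"

definition Supp :: "real^'n^'m \<Rightarrow> ('m \<times> 'n) set" where
  "Supp A = {(i, j). A $ i $ j \<noteq> 0}"

definition hard_thr :: "real \<Rightarrow> real^'n^'m \<Rightarrow> real^'n^'m" where
  "hard_thr a A = (\<chi> i j. if \<bar>A $ i $ j\<bar> > a then A $ i $ j else 0)"

definition diagonal_mat :: "real^'n^'n \<Rightarrow> bool" where
  "diagonal_mat A \<longleftrightarrow> (\<forall>i j. i \<noteq> j \<longrightarrow> A $ i $ j = 0)"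

end

theory Submission
  imports Defs
begin

text \<open>Entrywise, M - L_{t-1} = S* + E with |E| \<le> \<zeta>. Where S* vanishes the perturbed
  entry is at most \<zeta> and is thresholded away, so no spurious support appears; elsewhere
  either the entry survives, with error |E| \<le> \<zeta>, or it is killed, which forces
  |S*| \<le> \<zeta> + |E| \<le> 2\<zeta>. No structural hypothesis (incoherence, sparsity, rank) is
  needed beyond the entrywise bound on L* - L_{t-1}.\<close>

lemma max_norm_le_iff:
  fixes A :: "real^'n^'m"
  shows "max_norm A \<le> c \<longleftrightarrow> (\<forall>i j. \<bar>A $ i $ j\<bar> \<le> c)"
proof -
  have "{\<bar>A $ i $ j\<bar> | i j. True} = (\<lambda>(i, j). \<bar>A $ i $ j\<bar>) ` UNIV"
    by auto
  then have "finite {\<bar>A $ i $ j\<bar> | i j. True}"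
    by simp
  then show ?thesis
    unfolding max_norm_def by (subst Max_le_iff) auto
qed

lemma hard_thr_entry_perturbed:
  "hard_thr a (L + S - L') $ i $ j =
     (if \<bar>S $ i $ j + (L $ i $ j - L' $ i $ j)\<bar> > a then S $ i $ j + (L $ i $ j - L' $ i $ j) else 0)"
  unfolding hard_thr_def by (simp add: algebra_simps)

lemma max_norm_sub_hard_thr_le:
  fixes L L' S :: "real^'n^'m"
  assumes "max_norm (L - L') \<le> a"
  shows "max_norm (S - hard_thr a (L + S - L')) \<le> 2 * a"
proof -
  have "\<bar>(S - hard_thr a (L + S - L')) $ i $ j\<bar> \<le> 2 * a" for i j
  proof -
    have "\<bar>L $ i $ j - L' $ i $ j\<bar> \<le> a"
      using assms by (simp add: max_norm_le_iff)
    then show ?thesis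
      by (auto simp: hard_thr_entry_perturbed)
  qed
  then show ?thesis
    by (simp add: max_norm_le_iff)
qed

lemma Supp_hard_thr_subset:
  fixes L L' S :: "real^'n^'m"
  assumes "max_norm (L - L') \<le> a"
  shows "Supp (hard_thr a (L + S - L')) \<subseteq> Supp S"
proof -
  have "hard_thr a (L + S - L') $ i $ j = 0" if "S $ i $ j = 0" for i j
  proof -
    have "\<bar>L $ i $ j - L' $ i $ j\<bar> \<le> a"
      using assms by (simp add: max_norm_le_iff)
    then show ?thesis
      using that by (simp add: hard_thr_entry_perturbed)
  qed
  then show ?thesis
    unfolding Supp_def by auto
qed

theorem lemma1:
  fixes F :: "real^'n^'d"
    and U\<^sub>F \<Sigma>\<^sub>F :: "real^'d^'d"
    and V\<^sub>F :: "real^'d^'n"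
    and W :: "real^'d^'d"
    and Ls Ss Lp :: "real^'n^'n"
    and r z t :: nat
    and \<mu> c\<^sub>W :: real
  assumes "1 \<le> r" "r \<le> CARD('d)" "CARD('d) \<le> CARD('n)"
    and "rank F = CARD('d)"
    and "orthogonal_matrix U\<^sub>F" "diagonal_mat \<Sigma>\<^sub>F" "\<forall>i. \<Sigma>\<^sub>F $ i $ i > 0"
    and "transpose V\<^sub>F ** V\<^sub>F = mat 1"
    and "F = U\<^sub>F ** \<Sigma>\<^sub>F ** transpose V\<^sub>F"
    and "\<forall>i. norm (V\<^sub>F $ i) \<le> \<mu> * sqrt (real CARD('d) / real CARD('n))"
    and "transpose W = W" "rank W = r" "spec_norm W \<le> c\<^sub>W"
    and "Ls = transpose F ** W ** F"
    and "transpose Ss = Ss"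
    and "\<forall>i. card {j. Ss $ i $ j \<noteq> 0} \<le> z"
    and "\<forall>j. card {i. Ss $ i $ j \<noteq> 0} \<le> z"
    and "real z \<le> real CARD('n) /
           (20 * \<mu>^2 * real CARD('d) * (sigma_max F / sigma_min F))"
    and "1 \<le> t"
    and "max_norm (Ls - Lp) \<le> \<mu>^2 * (sigma_max F)^2 * (real CARD('d) / real CARD('n))
                                 * (c\<^sub>W / 5^(t-1))"
  shows "let M = Ls + Ss;
             \<zeta> = \<mu>^2 * (sigma_max F)^2 * (real CARD('d) / real CARD('n)) * (c\<^sub>W / 5^(t-1));
             St = hard_thr \<zeta> (M - Lp)
         in max_norm (Ss - St) \<le> 2 * \<mu>^2 * (sigma_max F)^2 * (real CARD('d) / real CARD('n))
                                    * (c\<^sub>W / 5^(t-1))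
            \<and> Supp St \<subseteq> Supp Ss"
proof -
  define \<zeta> where "\<zeta> = \<mu>^2 * (sigma_max F)^2 * (real CARD('d) / real CARD('n)) * (c\<^sub>W / 5^(t-1))"
  have "max_norm (Ls - Lp) \<le> \<zeta>"
    using assms(20) by (simp add: \<zeta>_def)
  then have "max_norm (Ss - hard_thr \<zeta> (Ls + Ss - Lp)) \<le> 2 * \<zeta>"
    and "Supp (hard_thr \<zeta> (Ls + Ss - Lp)) \<subseteq> Supp Ss"
    by (rule max_norm_sub_hard_thr_le, rule Supp_hard_thr_subset)
  then show ?thesis
    unfolding Let_def \<zeta>_def by (simp add: algebra_simps)
qed

end
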